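(* Let $\mathbb{R}^n$ be equipped with an arbitrary norm $\|\cdot\|$, let $g:\mathbb{R}^n\to\mathbb{R}^n$, $y\in\mathbb{R}^n$, $\rho>0$, $L\ge0$, $\mu>0$, and $B=\{x\in\mathbb{R}^n:\|x\|\le\rho\}$. Assume $g(0)=0$, $g$ is differentiable in $B$ with $\|g'(x^a)-g'(x^b)\|\le L\|x^a-x^b\|$ for all $x^a,x^b\in B$, that for every $x\in B$ the matrix $g'(x)$ is invertible with $\|g'(x)^{-1}\|\le \frac1\mu$, and that $\|y\|<\mu\rho$. Then there exists a solution $x^*$ of $g(x)=y$ with $\|x^*\|\le\frac{\|y\|}{\mu}$.
   Context: Matrix norms are operator norms subordinate to the chosen vector norm. *)

theory Defs
  imports "HOL-Analysis.Analysis"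
begin

text \<open>An arbitrary norm on a real vector space (not necessarily the built-in Euclidean one).\<close>
definition is_norm :: "('a::real_vector \<Rightarrow> real) \<Rightarrow> bool" where
  "is_norm N \<longleftrightarrow>
     (\<forall>x. 0 \<le> N x) \<and> (\<forall>x. N x = 0 \<longleftrightarrow> x = 0) \<and>
     (\<forall>c x. N (c *\<^sub>R x) = \<bar>c\<bar> * N x) \<and> (\<forall>x y. N (x + y) \<le> N x + N y)"

definition opnorm :: "(real^'n \<Rightarrow> real) \<Rightarrow> real^'n^'n \<Rightarrow> real" where
  "opnorm N A = Sup {N (A *v x) | x. N x \<le> 1}"

end

theory Submission
  imports Defs
begin

text \<open>
  Fix \<open>\<nu>\<close> with \<open>\<parallel>y\<parallel>/\<rho> < \<nu> < \<mu>\<close> and minimise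
  \<open>H x = \<parallel>g x - y\<parallel> + \<nu> \<parallel>x\<parallel>\<close> over the compact ball \<open>B\<close>.
  Since \<open>H x\<^sub>0 \<le> H 0 = \<parallel>y\<parallel>\<close>, a minimiser \<open>x\<^sub>0\<close> satisfies
  \<open>\<nu> \<parallel>x\<^sub>0\<parallel> \<le> \<parallel>y\<parallel> < \<nu> \<rho>\<close>, so it is an interior point. If \<open>g x\<^sub>0 \<noteq> y\<close>, a short
  step along the Newton direction \<open>-g'(x\<^sub>0)\<^sup>-\<^sup>1 (g x\<^sub>0 - y)\<close> lowers the residual at
  rate \<open>\<parallel>g x\<^sub>0 - y\<parallel>\<close> but raises \<open>\<nu> \<parallel>x\<parallel>\<close> only at rate
  \<open>(\<nu>/\<mu>) \<parallel>g x\<^sub>0 - y\<parallel>\<close>, contradicting minimality. Hence \<open>g x\<^sub>0 = y\<close> with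
  \<open>\<parallel>x\<^sub>0\<parallel> \<le> \<parallel>y\<parallel>/\<nu>\<close>; a solution of least norm then satisfies this bound for
  every such \<open>\<nu>\<close>, hence for \<open>\<nu> = \<mu>\<close>.
\<close>

lemma is_norm_nonneg: "is_norm N \<Longrightarrow> 0 \<le> N x"
  unfolding is_norm_def by blast

lemma is_norm_eq_zero: "is_norm N \<Longrightarrow> N x = 0 \<longleftrightarrow> x = 0"
  unfolding is_norm_def by blast

lemma is_norm_scaleR: "is_norm N \<Longrightarrow> N (c *\<^sub>R x) = \<bar>c\<bar> * N x"
  unfolding is_norm_def by blast

lemma is_norm_triangle: "is_norm N \<Longrightarrow> N (x + y) \<le> N x + N y"
  unfolding is_norm_def by blast

lemma is_norm_zero [simp]: "is_norm N \<Longrightarrow> N 0 = 0"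
  by (simp add: is_norm_eq_zero)

lemma is_norm_pos: "is_norm N \<Longrightarrow> x \<noteq> 0 \<Longrightarrow> 0 < N x"
  using is_norm_nonneg is_norm_eq_zero by (metis order_le_less)

lemma is_norm_uminus [simp]: "is_norm N \<Longrightarrow> N (- x) = N x"
  using is_norm_scaleR[of N "-1" x] by simp

lemma is_norm_minus_commute: "is_norm N \<Longrightarrow> N (x - y) = N (y - x)"
  using is_norm_uminus[of N "y - x"] by simp

lemma is_norm_reverse_triangle: "is_norm N \<Longrightarrow> \<bar>N x - N y\<bar> \<le> N (x - y)"
  using is_norm_triangle[of N "x - y" y] is_norm_triangle[of N "y - x" x]
    is_norm_minus_commute[of N x y] by simp

lemma is_norm_sum: "is_norm N \<Longrightarrow> N (sum f S) \<le> (\<Sum>i\<in>S. N (f i))"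
proof (induction S rule: infinite_finite_induct)
  case (insert a S)
  then show ?case using is_norm_triangle[of N "f a" "sum f S"] by simp
qed simp_all

lemma is_norm_le_norm:
  fixes N :: "'a::euclidean_space \<Rightarrow> real"
  assumes n: "is_norm N"
  obtains c where "c > 0" "\<And>x. N x \<le> c * norm x"
proof
  define c where "c = 1 + (\<Sum>b\<in>Basis. N b)"
  show "c > 0"
    unfolding c_def using sum_nonneg[of Basis N] is_norm_nonneg[OF n] by fastforce
  fix x :: 'a
  have "N x = N (\<Sum>b\<in>Basis. (x \<bullet> b) *\<^sub>R b)"
    by (simp add: euclidean_representation)
  also have "\<dots> \<le> (\<Sum>b\<in>Basis. \<bar>x \<bullet> b\<bar> * N b)"
    using is_norm_sum[OF n, of "\<lambda>b. (x \<bullet> b) *\<^sub>R b" Basis]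
    by (simp add: is_norm_scaleR[OF n])
  also have "\<dots> \<le> (\<Sum>b\<in>Basis. norm x * N b)"
    by (intro sum_mono mult_right_mono Basis_le_norm is_norm_nonneg[OF n])
  also have "\<dots> = norm x * (\<Sum>b\<in>Basis. N b)"
    by (simp add: sum_distrib_left)
  also have "\<dots> \<le> c * norm x"
    by (simp add: c_def algebra_simps)
  finally show "N x \<le> c * norm x" .
qed

lemma is_norm_continuous_on:
  fixes N :: "'a::euclidean_space \<Rightarrow> real"
  assumes n: "is_norm N"
  shows "continuous_on S N"
proof -
  obtain c where c: "c > 0" "\<And>x. N x \<le> c * norm x" using is_norm_le_norm[OF n] by blast
  have "c-lipschitz_on S N"
  proof (rule lipschitz_onI)
    fix x y
    have "dist (N x) (N y) \<le> N (x - y)"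
      using is_norm_reverse_triangle[OF n] by (simp add: dist_real_def)
    also have "\<dots> \<le> c * dist x y" using c(2)[of "x - y"] by (simp add: dist_norm)
    finally show "dist (N x) (N y) \<le> c * dist x y" .
  qed (use c in simp)
  then show ?thesis by (rule lipschitz_on_continuous_on)
qed

lemma is_norm_ge_norm:
  fixes N :: "'a::euclidean_space \<Rightarrow> real"
  assumes n: "is_norm N"
  obtains d where "d > 0" "\<And>x. d * norm x \<le> N x"
proof -
  have "(SOME b. b \<in> Basis) \<in> sphere (0::'a) 1" by simp
  then obtain u where u: "u \<in> sphere (0::'a) 1" "\<And>z. z \<in> sphere 0 1 \<Longrightarrow> N u \<le> N z"
    using continuous_attains_inf[OF compact_sphere _ is_norm_continuous_on[OF n]] by blast
  have "N u * norm x \<le> N x" for x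
  proof (cases "x = 0")
    case False
    then have "N u \<le> N ((1 / norm x) *\<^sub>R x)" by (intro u(2)) simp
    also have "\<dots> = N x / norm x" by (simp add: is_norm_scaleR[OF n])
    finally show ?thesis using False by (simp add: field_simps)
  qed (simp add: is_norm_nonneg[OF n])
  moreover have "N u > 0" using u(1) is_norm_pos[OF n, of u] by (metis mem_sphere_0 norm_zero zero_neq_one)
  ultimately show ?thesis using that by blast
qed

lemma compact_is_norm_ball:
  fixes N :: "'a::euclidean_space \<Rightarrow> real"
  assumes n: "is_norm N"
  shows "compact {x. N x \<le> \<rho>}"
proof (rule compact_eq_bounded_closed[THEN iffD2], rule conjI)
  obtain d where d: "d > 0" "\<And>x. d * norm x \<le> N x" using is_norm_ge_norm[OF n] by blast
  show "bounded {x. N x \<le> \<rho>}" unfolding bounded_iff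
  proof (intro exI ballI)
    fix x assume "x \<in> {x. N x \<le> \<rho>}"
    then have "d * norm x \<le> \<rho>" using d(2)[of x] by simp
    then show "norm x \<le> \<rho> / d" using d(1) by (simp add: field_simps)
  qed
  show "closed {x. N x \<le> \<rho>}"
    by (intro closed_Collect_le continuous_on_const is_norm_continuous_on[OF n])
qed

lemma compact_is_norm_ball_fibre:
  fixes N :: "'a::euclidean_space \<Rightarrow> real" and g :: "'a \<Rightarrow> 'b::t1_space"
  assumes n: "is_norm N" and g: "continuous_on {x. N x \<le> \<rho>} g"
  shows "compact {x \<in> {x. N x \<le> \<rho>}. g x = y}"
proof -
  have "closed {x \<in> {x. N x \<le> \<rho>}. g x = y}"
    by (intro continuous_closed_preimage_constant g compact_imp_closed compact_is_norm_ball[OF n])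
  from compact_Int_closed[OF compact_is_norm_ball[OF n, of \<rho>] this] show ?thesis
    by (simp add: Int_absorb1 subset_eq)
qed

lemma opnorm_le:
  fixes N :: "real^'n \<Rightarrow> real"
  assumes n: "is_norm N"
  shows "N (A *v x) \<le> opnorm N A * N x"
proof (cases "x = 0")
  case False
  obtain c where c: "c > 0" "\<And>x. N x \<le> c * norm x" using is_norm_le_norm[OF n] by blast
  obtain d where d: "d > 0" "\<And>x. d * norm x \<le> N x" using is_norm_ge_norm[OF n] by blast
  have "bdd_above {N (A *v v) | v. N v \<le> 1}"
  proof (rule bdd_aboveI)
    fix r assume "r \<in> {N (A *v v) | v. N v \<le> 1}"
    then obtain v where v: "r = N (A *v v)" "N v \<le> 1" by blast
    have "r \<le> c * (onorm ((*v) A) * norm v)"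
      using c(2)[of "A *v v"] onorm[OF matrix_vector_mul_bounded_linear, of A v] c(1) v(1)
      by (meson mult_left_mono less_imp_le order_trans)
    also have "\<dots> \<le> c * (onorm ((*v) A) * (1 / d))"
      using d v(2) c(1) onorm_pos_le[OF matrix_vector_mul_bounded_linear, of A]
      by (intro mult_left_mono) (auto simp: field_simps intro: order_trans)
    finally show "r \<le> c * (onorm ((*v) A) * (1 / d))" .
  qed
  moreover have Nx: "N x > 0" using False is_norm_pos[OF n] by blast
  ultimately have "N (A *v ((1 / N x) *\<^sub>R x)) \<le> opnorm N A"
    unfolding opnorm_def by (intro cSup_upper) (auto simp: is_norm_scaleR[OF n])
  then show ?thesis
    using Nx by (simp add: matrix_vector_mult_scaleR is_norm_scaleR[OF n] field_simps)
qed (simp add: n)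

lemma opnorm_le_imp_le:
  fixes N :: "real^'n \<Rightarrow> real"
  assumes n: "is_norm N" and "opnorm N A \<le> c"
  shows "N (A *v x) \<le> c * N x"
  using opnorm_le[OF n, of A x] mult_right_mono[OF assms(2) is_norm_nonneg[OF n, of x]] by linarith

lemma has_derivative_within_is_norm:
  fixes N :: "'a::euclidean_space \<Rightarrow> real" and M :: "'b::euclidean_space \<Rightarrow> real"
  assumes N: "is_norm N" and M: "is_norm M"
    and f: "(f has_derivative f') (at x within S)" and "\<epsilon> > 0"
  obtains \<delta> where "\<delta> > 0"
    "\<And>z. z \<in> S \<Longrightarrow> N (z - x) < \<delta> \<Longrightarrow> M (f z - f x - f' (z - x)) \<le> \<epsilon> * N (z - x)"
proof -
  obtain c where c: "c > 0" "\<And>v. M v \<le> c * norm v" using is_norm_le_norm[OF M] by blast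
  obtain d where d: "d > 0" "\<And>v. d * norm v \<le> N v" using is_norm_ge_norm[OF N] by blast
  have "\<epsilon> * d / c > 0" using \<open>\<epsilon> > 0\<close> c d by simp
  then obtain \<delta> where "\<delta> > 0" and \<delta>: "\<And>z. z \<in> S \<Longrightarrow> norm (z - x) < \<delta> \<Longrightarrow>
      norm (f z - f x - f' (z - x)) \<le> \<epsilon> * d / c * norm (z - x)"
    using f unfolding has_derivative_within_alt by blast
  show ?thesis
  proof (rule that[of "d * \<delta>"])
    show "d * \<delta> > 0" using d \<open>\<delta> > 0\<close> by simp
    fix z assume "z \<in> S" "N (z - x) < d * \<delta>"
    then have "d * norm (z - x) < d * \<delta>" using d(2)[of "z - x"] by linarith
    then have "norm (z - x) < \<delta>" using d(1) by simp
    have "M (f z - f x - f' (z - x)) \<le> c * (\<epsilon> * d / c * norm (z - x))"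
      using c d(1) \<delta>[OF \<open>z \<in> S\<close> \<open>norm (z - x) < \<delta>\<close>]
      by (meson mult_left_mono less_imp_le order_trans)
    also have "\<dots> = \<epsilon> * (d * norm (z - x))" using c(1) by simp
    also have "\<dots> \<le> \<epsilon> * N (z - x)" using d(2) \<open>\<epsilon> > 0\<close> by simp
    finally show "M (f z - f x - f' (z - x)) \<le> \<epsilon> * N (z - x)" .
  qed
qed

lemma matrix_inv_right:
  fixes A :: "'a::semiring_1^'n^'n"
  assumes "invertible A"
  shows "A ** matrix_inv A = mat 1"
  using assms unfolding invertible_def matrix_inv_def by (rule someI_ex[THEN conjunct1])

lemma newton_step_residual_le:
  fixes N :: "real^'n \<Rightarrow> real" and A :: "real^'n^'n"
  assumes n: "is_norm N" and Ad: "A *v d = - (g x - y)" and t: "0 \<le> t" "t \<le> 1"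
  shows "N (g (x + t *\<^sub>R d) - y)
    \<le> (1 - t) * N (g x - y) + N (g (x + t *\<^sub>R d) - g x - A *v (t *\<^sub>R d))"
proof -
  have "g (x + t *\<^sub>R d) - y
      = (1 - t) *\<^sub>R (g x - y) + (g (x + t *\<^sub>R d) - g x - A *v (t *\<^sub>R d))"
    by (simp add: matrix_vector_mult_scaleR Ad algebra_simps)
  then show ?thesis
    using is_norm_triangle[OF n, of "(1 - t) *\<^sub>R (g x - y)"] t
    by (simp only: is_norm_scaleR[OF n] abs_of_nonneg diff_ge_0_iff_ge)
qed

lemma newton_step_decreases:
  fixes N :: "real^'n \<Rightarrow> real" and g :: "real^'n \<Rightarrow> real^'n" and A :: "real^'n^'n"
    and \<rho> \<mu> \<nu> :: real
  defines "B \<equiv> {x. N x \<le> \<rho>}"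
  assumes n: "is_norm N"
    and deriv: "(g has_derivative (\<lambda>h. A *v h)) (at x within B)"
    and x: "N x < \<rho>" and A: "invertible A" and A_inv: "opnorm N (matrix_inv A) \<le> 1 / \<mu>"
    and \<nu>: "0 \<le> \<nu>" "\<nu> < \<mu>" and "g x \<noteq> y"
  shows "\<exists>z\<in>B. N (g z - y) + \<nu> * N z < N (g x - y) + \<nu> * N x"
proof -
  define e where "e = g x - y"
  define d where "d = matrix_inv A *v (- e)"
  have Ne: "N e > 0" using \<open>g x \<noteq> y\<close> is_norm_pos[OF n] unfolding e_def by simp
  have Ad: "A *v d = - e"
    unfolding d_def matrix_vector_mul_assoc matrix_inv_right[OF A] by simp
  have Nd: "N d \<le> N e / \<mu>"
    using opnorm_le_imp_le[OF n A_inv, of "- e"] unfolding d_def by (simp add: n)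
  \<comment> \<open>With this \<open>\<epsilon>\<close> the losses \<open>(\<epsilon> + \<nu>) t \<parallel>d\<parallel> \<le> (\<mu> + \<nu>)/(2\<mu>) t \<parallel>e\<parallel>\<close> stay below the gain \<open>t \<parallel>e\<parallel>\<close>.\<close>
  define \<epsilon> where "\<epsilon> = (\<mu> - \<nu>) / 2"
  have "\<epsilon> > 0" using \<nu> unfolding \<epsilon>_def by simp
  then obtain \<delta> where "\<delta> > 0" and \<delta>: "\<And>z. z \<in> B \<Longrightarrow> N (z - x) < \<delta> \<Longrightarrow>
      N (g z - g x - A *v (z - x)) \<le> \<epsilon> * N (z - x)"
    using has_derivative_within_is_norm[OF n n deriv] by blast
  define \<Delta> where "\<Delta> = min \<delta> (\<rho> - N x)"
  define t where "t = min 1 (\<Delta> / (N d + 1))"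
  have "\<Delta> > 0" using \<open>\<delta> > 0\<close> x unfolding \<Delta>_def by simp
  have Nd0: "N d \<ge> 0" by (rule is_norm_nonneg[OF n])
  have t: "0 < t" "t \<le> 1" "t * N d < \<Delta>"
  proof -
    show "0 < t" "t \<le> 1" using \<open>\<Delta> > 0\<close> Nd0 unfolding t_def by auto
    have "t * N d \<le> \<Delta> / (N d + 1) * N d"
      unfolding t_def using Nd0 by (intro mult_right_mono) auto
    also have "\<dots> < \<Delta>" using \<open>\<Delta> > 0\<close> Nd0 by (simp add: field_simps)
    finally show "t * N d < \<Delta>" .
  qed
  define z where "z = x + t *\<^sub>R d"
  have Nzx: "N (z - x) = t * N d"
    unfolding z_def using t(1) by (simp add: is_norm_scaleR[OF n])
  have Nz: "N z \<le> N x + t * N d"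
    using is_norm_triangle[OF n, of x "t *\<^sub>R d"] Nzx unfolding z_def by simp
  then have "z \<in> B" using t(3) unfolding B_def \<Delta>_def by simp
  have "N (g z - g x - A *v (t *\<^sub>R d)) \<le> \<epsilon> * (t * N d)"
    using \<delta>[OF \<open>z \<in> B\<close>] t(3) unfolding Nzx \<Delta>_def by (simp add: z_def)
  then have "N (g z - y) \<le> (1 - t) * N e + \<epsilon> * (t * N d)"
    using newton_step_residual_le[where g=g and x=x and y=y,
        OF n Ad[unfolded e_def] less_imp_le[OF t(1)] t(2)]
    unfolding z_def e_def by linarith
  moreover have "\<nu> * N z \<le> \<nu> * N x + \<nu> * (t * N d)"
    using mult_left_mono[OF Nz \<nu>(1)] by (simp add: distrib_left)
  moreover have "(\<epsilon> + \<nu>) * (t * N d) < t * N e"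
  proof -
    have "(\<epsilon> + \<nu>) * (t * N d) \<le> (\<epsilon> + \<nu>) * (t * (N e / \<mu>))"
      using Nd t(1) \<open>\<epsilon> > 0\<close> \<nu>(1) by (intro mult_left_mono) auto
    also have "\<dots> < t * N e"
      using t(1) Ne \<nu> unfolding \<epsilon>_def by (simp add: field_simps)
    finally show ?thesis .
  qed
  ultimately have "N (g z - y) + \<nu> * N z < N e + \<nu> * N x"
    by (simp add: algebra_simps)
  then show ?thesis using \<open>z \<in> B\<close> unfolding e_def by blast
qed

lemma solution_in_norm_ball:
  fixes N :: "real^'n \<Rightarrow> real" and g :: "real^'n \<Rightarrow> real^'n"
    and g' :: "real^'n \<Rightarrow> real^'n^'n" and \<rho> \<mu> \<nu> :: real
  defines "B \<equiv> {x. N x \<le> \<rho>}"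
  assumes n: "is_norm N" and g0: "g 0 = 0"
    and deriv: "\<And>x. x \<in> B \<Longrightarrow> (g has_derivative (\<lambda>h. g' x *v h)) (at x within B)"
    and inv: "\<And>x. x \<in> B \<Longrightarrow> invertible (g' x)"
    and inv_bound: "\<And>x. x \<in> B \<Longrightarrow> opnorm N (matrix_inv (g' x)) \<le> 1 / \<mu>"
    and \<nu>: "0 < \<nu>" "\<nu> < \<mu>" and y: "N y < \<nu> * \<rho>"
  shows "\<exists>x\<in>B. g x = y \<and> \<nu> * N x \<le> N y"
proof -
  define H where "H x = N (g x - y) + \<nu> * N x" for x
  have "0 < \<nu> * \<rho>" using y is_norm_nonneg[OF n, of y] by linarith
  then have "0 \<in> B" using \<nu>(1) unfolding B_def by (simp add: n zero_less_mult_iff)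
  have "continuous_on B g" by (rule has_derivative_continuous_on[OF deriv])
  then have "continuous_on B (\<lambda>x. N (g x - y))"
    by (intro continuous_on_compose2[OF is_norm_continuous_on[OF n, of UNIV]] continuous_intros)
      auto
  then have "continuous_on B H"
    unfolding H_def by (intro continuous_intros is_norm_continuous_on[OF n])
  then obtain x where x: "x \<in> B" "\<And>z. z \<in> B \<Longrightarrow> H x \<le> H z"
    using continuous_attains_inf[OF compact_is_norm_ball[OF n]] \<open>0 \<in> B\<close> unfolding B_def by blast
  have "H x \<le> H 0" using x(2)[OF \<open>0 \<in> B\<close>] .
  then have bound: "\<nu> * N x \<le> N y"
    unfolding H_def using g0 is_norm_nonneg[OF n, of "g x - y"] by (simp add: n)
  then have "\<nu> * N x < \<nu> * \<rho>" using y by linarith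
  then have "N x < \<rho>" using \<nu>(1) by simp
  have "g x = y"
  proof (rule ccontr)
    assume "g x \<noteq> y"
    have "\<exists>z\<in>B. H z < H x"
      unfolding H_def B_def
      by (rule newton_step_decreases[OF n deriv[OF x(1), unfolded B_def] \<open>N x < \<rho>\<close>
            inv[OF x(1)] inv_bound[OF x(1)] less_imp_le[OF \<nu>(1)] \<nu>(2) \<open>g x \<noteq> y\<close>])
    then show False using x(2) by (meson not_le)
  qed
  with x(1) bound show ?thesis by blast
qed

lemma mult_le_of_dense:
  fixes a b c \<mu> :: real
  assumes "a < \<mu>" "0 \<le> c" and le: "\<And>\<nu>. a < \<nu> \<Longrightarrow> \<nu> < \<mu> \<Longrightarrow> \<nu> * c \<le> b"
  shows "\<mu> * c \<le> b"
proof (cases "c = 0")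
  case True
  then show ?thesis using le[of "(a + \<mu>) / 2"] \<open>a < \<mu>\<close> by simp
next
  case False
  then have "c > 0" using \<open>0 \<le> c\<close> by simp
  have "\<mu> \<le> b / c"
    by (rule dense_le_bounded[OF \<open>a < \<mu>\<close>]) (use le \<open>c > 0\<close> in \<open>simp add: pos_le_divide_eq\<close>)
  then show ?thesis using \<open>c > 0\<close> by (simp add: pos_le_divide_eq)
qed

theorem corollary2:
  fixes N :: "real^'n \<Rightarrow> real"
    and g :: "real^'n \<Rightarrow> real^'n"
    and g' :: "real^'n \<Rightarrow> real^'n^'n"
    and y :: "real^'n"
    and \<rho> L \<mu> :: real
  defines "B \<equiv> {x. N x \<le> \<rho>}"
  assumes normN: "is_norm N"
    and rho_pos: "\<rho> > 0" and L_nonneg: "L \<ge> 0" and mu_pos: "\<mu> > 0"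
    and g0: "g 0 = 0"
    and deriv: "\<And>x. x \<in> B \<Longrightarrow> (g has_derivative (\<lambda>h. g' x *v h)) (at x within B)"
    and lip: "\<And>xa xb. xa \<in> B \<Longrightarrow> xb \<in> B \<Longrightarrow> opnorm N (g' xa - g' xb) \<le> L * N (xa - xb)"
    and inv: "\<And>x. x \<in> B \<Longrightarrow> invertible (g' x)"
    and inv_bound: "\<And>x. x \<in> B \<Longrightarrow> opnorm N (matrix_inv (g' x)) \<le> 1 / \<mu>"
    and y_small: "N y < \<mu> * \<rho>"
  shows "\<exists>xs. g xs = y \<and> N xs \<le> N y / \<mu>"
proof -
  define a where "a = N y / \<rho>"
  have "0 \<le> a" "a < \<mu>"
    using y_small rho_pos is_norm_nonneg[OF normN, of y] by (auto simp: a_def field_simps)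
  have sol: "\<exists>x\<in>B. g x = y \<and> \<nu> * N x \<le> N y" if "a < \<nu>" "\<nu> < \<mu>" for \<nu>
  proof -
    have "0 < \<nu>" using that \<open>0 \<le> a\<close> by linarith
    have "N y < \<nu> * \<rho>" using that rho_pos unfolding a_def by (simp add: divide_less_eq)
    with \<open>0 < \<nu>\<close> show ?thesis
      using solution_in_norm_ball[OF normN g0 deriv[unfolded B_def] inv[unfolded B_def]
          inv_bound[unfolded B_def]] \<open>\<nu> < \<mu>\<close>
      unfolding B_def by blast
  qed
  define Z where "Z = {x \<in> B. g x = y}"
  have "compact Z"
    unfolding Z_def B_def
    by (rule compact_is_norm_ball_fibre[OF normN has_derivative_continuous_on])
      (rule deriv[unfolded B_def])
  have "Z \<noteq> {}" using sol[of "(a + \<mu>) / 2"] \<open>a < \<mu>\<close> unfolding Z_def by auto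
  then obtain x where x: "x \<in> Z" "\<And>z. z \<in> Z \<Longrightarrow> N x \<le> N z"
    using continuous_attains_inf[OF \<open>compact Z\<close> _ is_norm_continuous_on[OF normN]] by blast
  have "\<mu> * N x \<le> N y"
  proof (rule mult_le_of_dense[OF \<open>a < \<mu>\<close> is_norm_nonneg[OF normN]])
    fix \<nu> assume "a < \<nu>" "\<nu> < \<mu>"
    then obtain z where "z \<in> Z" "\<nu> * N z \<le> N y" using sol unfolding Z_def by blast
    moreover have "\<nu> * N x \<le> \<nu> * N z"
      using x(2)[OF \<open>z \<in> Z\<close>] \<open>0 \<le> a\<close> \<open>a < \<nu>\<close> by (intro mult_left_mono) auto
    ultimately show "\<nu> * N x \<le> N y" by linarith
  qed
  then show ?thesis using x(1) mu_pos unfolding Z_def by (auto simp: field_simps)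
qed

end
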